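(* The generator $a$ is not left invertible in $\Pi_2=\langle a,b,c\mid (ab^ic)^2=1\ (i\geq 1)\rangle$: there is no word $u\in\{a,b,c\}^\ast$ with $ua=1$ in $\Pi_2$. In particular, $a$ is not invertible in $\Pi_2$. *)

theory Defs
  imports Main
begin

datatype gen = A | B | C

definition rel_word :: "nat \<Rightarrow> gen list" where
  "rel_word i = (A # replicate i B @ [C]) @ (A # replicate i B @ [C])"

inductive pi2_step :: "gen list \<Rightarrow> gen list \<Rightarrow> bool" where
  "i \<ge> 1 \<Longrightarrow> pi2_step (x @ rel_word i @ y) (x @ y)"

definition pi2_eq :: "gen list \<Rightarrow> gen list \<Rightarrow> bool" where
  "pi2_eq = (symclp pi2_step)\<^sup>*\<^sup>*"

end

theory Submission
  imports Defs
begin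

text \<open>Map \<open>a\<close> to an opening bracket, \<open>c\<close> to a closing bracket and \<open>b\<close> to the identity of the
  bicyclic monoid of reduced bracket words. Every relator \<open>(a b\<^sup>i c)\<^sup>2\<close> then becomes \<open>()()\<close>,
  which reduces to the empty word, so the map factors through \<open>\<Pi>\<^sub>2\<close>. But a word ending
  in an opening bracket never reduces to the empty word: multiplying on the left cannot
  close a trailing opening bracket.\<close>

text \<open>The pair \<open>(m, n)\<close> stands for the reduced bracket word \<open>)\<^sup>m (\<^sup>n\<close>.\<close>
definition bicyclic_mult :: "nat \<times> nat \<Rightarrow> nat \<times> nat \<Rightarrow> nat \<times> nat" where
  "bicyclic_mult p q = (fst p + (fst q - snd p), snd q + (snd p - fst q))"

lemma bicyclic_mult_assoc:
  "bicyclic_mult (bicyclic_mult p q) r = bicyclic_mult p (bicyclic_mult q r)"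
  by (cases p; cases q; cases r) (auto simp: bicyclic_mult_def split: nat_diff_split)

lemma bicyclic_mult_unit [simp]:
  "bicyclic_mult (0, 0) p = p" "bicyclic_mult p (0, 0) = p"
  by (cases p, simp add: bicyclic_mult_def)+

lemma bicyclic_open_not_left_invertible: "bicyclic_mult p (0, 1) \<noteq> (0, 0)"
  by (simp add: bicyclic_mult_def)

fun bicyclic_gen :: "gen \<Rightarrow> nat \<times> nat" where
  "bicyclic_gen A = (0, 1)"
| "bicyclic_gen B = (0, 0)"
| "bicyclic_gen C = (1, 0)"

fun bicyclic_eval :: "gen list \<Rightarrow> nat \<times> nat" where
  "bicyclic_eval [] = (0, 0)"
| "bicyclic_eval (g # w) = bicyclic_mult (bicyclic_gen g) (bicyclic_eval w)"

lemma bicyclic_eval_append: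
  "bicyclic_eval (x @ y) = bicyclic_mult (bicyclic_eval x) (bicyclic_eval y)"
  by (induction x) (simp_all add: bicyclic_mult_assoc)

lemma bicyclic_eval_replicate_B: "bicyclic_eval (replicate i B) = (0, 0)"
  by (induction i) simp_all

lemma bicyclic_eval_rel_word: "bicyclic_eval (rel_word i) = (0, 0)"
  by (simp add: rel_word_def bicyclic_eval_append bicyclic_eval_replicate_B bicyclic_mult_def)

lemma pi2_eq_invariant:
  assumes relator_invariant: "\<And>x y i. i \<ge> 1 \<Longrightarrow> f (x @ rel_word i @ y) = f (x @ y)"
    and "pi2_eq u v"
  shows "f u = f v"
proof -
  have step_invariant: "f x = f y" if "pi2_step x y" for x y
    using that by (induction rule: pi2_step.induct) (rule relator_invariant)
  from \<open>pi2_eq u v\<close> show ?thesis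
    unfolding pi2_eq_def
  proof (induction rule: rtranclp_induct)
    case base
    then show ?case by simp
  next
    case (step y z)
    then show ?case by (auto simp: symclp_def dest: step_invariant)
  qed
qed

lemma pi2_eq_bicyclic_eval: "pi2_eq u v \<Longrightarrow> bicyclic_eval u = bicyclic_eval v"
  by (rule pi2_eq_invariant) (simp_all add: bicyclic_eval_append bicyclic_eval_rel_word)

theorem mainTheorem5:
  shows "\<not> (\<exists>u. pi2_eq (u @ [A]) [])"
proof
  assume "\<exists>u. pi2_eq (u @ [A]) []"
  then obtain u where "pi2_eq (u @ [A]) []" by blast
  then have "bicyclic_mult (bicyclic_eval u) (0, 1) = (0, 0)"
    by (metis pi2_eq_bicyclic_eval bicyclic_eval_append bicyclic_eval.simps
        bicyclic_gen.simps(1) bicyclic_mult_unit(2))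
  then show False using bicyclic_open_not_left_invertible by blast
qed

end
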